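(* There exist a dynamical system $(X,T)$ which is non-proximal, not totally transitive and transitive compact, and a point $x_0\in X$ such that $\omega_{\mathcal{N}_T}(x_0)\neq\omega_T(x)$ for all $x\in X$.
   Context: A dynamical system $(X,T)$: $X$ is a compact metric space (metric $d$) with more than one point and without isolated points, $T:X\to X$ a continuous surjection. $(X,T)$ is proximal if $\liminf_{n\to\infty}d(T^nx,T^ny)=0$ for all $x,y\in X$. "Opene" means open and nonempty. $N_T(U,V)=\{n\in\mathbb{Z}_+:U\cap T^{-n}V\neq\varnothing\}$. $(X,T)$ is transitive if $N_T(U,V)\neq\varnothing$ for all opene $U,V$; totally transitive if $(X,T^k)$ is transitive for every $k\in\mathbb{N}$. $\mathcal{N}_T$ is the family of subsets of $\mathbb{Z}_+$ containing some $N_T(U,V)$ with $U,V$ opene; $\omega_{\mathcal{N}_T}(x)=\bigcap_{F\in\mathcal{N}_T}\overline{\{T^ix:i\in F\}}$; transitive compact means $\omega_{\mathcal{N}_T}(x)\neq\varnothing$ for all $x$. $\omega_T(x)=\bigcap_{n\ge1}\overline{\{T^kx:k\ge n\}}$. *)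

theory Defs
  imports "HOL-Analysis.Analysis" "HOL-Library.Liminf_Limsup"
begin

definition dyn_sys :: "'a set \<Rightarrow> ('a \<Rightarrow> 'a \<Rightarrow> real) \<Rightarrow> ('a \<Rightarrow> 'a) \<Rightarrow> bool" where
  "dyn_sys X d T \<longleftrightarrow>
     Metric_space X d \<and>
     compact_space (Metric_space.mtopology X d) \<and>
     (\<exists>x\<in>X. \<exists>y\<in>X. x \<noteq> y) \<and>
     (\<forall>x\<in>X. \<not> openin (Metric_space.mtopology X d) {x}) \<and>
     continuous_map (Metric_space.mtopology X d) (Metric_space.mtopology X d) T \<and>
     T ` X = X"

definition proximal :: "'a set \<Rightarrow> ('a \<Rightarrow> 'a \<Rightarrow> real) \<Rightarrow> ('a \<Rightarrow> 'a) \<Rightarrow> bool" where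
  "proximal X d T \<longleftrightarrow>
     (\<forall>x\<in>X. \<forall>y\<in>X. liminf (\<lambda>n. ereal (d ((T ^^ n) x) ((T ^^ n) y))) = 0)"

definition opene :: "'a set \<Rightarrow> ('a \<Rightarrow> 'a \<Rightarrow> real) \<Rightarrow> 'a set \<Rightarrow> bool" where
  "opene X d U \<longleftrightarrow> openin (Metric_space.mtopology X d) U \<and> U \<noteq> {}"

definition hitting_times :: "('a \<Rightarrow> 'a) \<Rightarrow> 'a set \<Rightarrow> 'a set \<Rightarrow> nat set" where
  "hitting_times T U V = {n. \<exists>x\<in>U. (T ^^ n) x \<in> V}"

definition transitive_sys :: "'a set \<Rightarrow> ('a \<Rightarrow> 'a \<Rightarrow> real) \<Rightarrow> ('a \<Rightarrow> 'a) \<Rightarrow> bool" where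
  "transitive_sys X d T \<longleftrightarrow>
     (\<forall>U V. opene X d U \<and> opene X d V \<longrightarrow> hitting_times T U V \<noteq> {})"

definition totally_transitive :: "'a set \<Rightarrow> ('a \<Rightarrow> 'a \<Rightarrow> real) \<Rightarrow> ('a \<Rightarrow> 'a) \<Rightarrow> bool" where
  "totally_transitive X d T \<longleftrightarrow> (\<forall>k::nat. k \<ge> 1 \<longrightarrow> transitive_sys X d (T ^^ k))"

definition hitting_family :: "'a set \<Rightarrow> ('a \<Rightarrow> 'a \<Rightarrow> real) \<Rightarrow> ('a \<Rightarrow> 'a) \<Rightarrow> nat set set" where
  "hitting_family X d T =
     {F. \<exists>U V. opene X d U \<and> opene X d V \<and> hitting_times T U V \<subseteq> F}"

definition omega_NT :: "'a set \<Rightarrow> ('a \<Rightarrow> 'a \<Rightarrow> real) \<Rightarrow> ('a \<Rightarrow> 'a) \<Rightarrow> 'a \<Rightarrow> 'a set" where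
  "omega_NT X d T x =
     X \<inter> (\<Inter>F\<in>hitting_family X d T.
            Metric_space.mtopology X d closure_of ((\<lambda>i. (T ^^ i) x) ` F))"

definition transitive_compact :: "'a set \<Rightarrow> ('a \<Rightarrow> 'a \<Rightarrow> real) \<Rightarrow> ('a \<Rightarrow> 'a) \<Rightarrow> bool" where
  "transitive_compact X d T \<longleftrightarrow> (\<forall>x\<in>X. omega_NT X d T x \<noteq> {})"

definition omega_T :: "'a set \<Rightarrow> ('a \<Rightarrow> 'a \<Rightarrow> real) \<Rightarrow> ('a \<Rightarrow> 'a) \<Rightarrow> 'a \<Rightarrow> 'a set" where
  "omega_T X d T x =
     X \<inter> (\<Inter>n\<in>{1..}. Metric_space.mtopology X d closure_of ((\<lambda>k. (T ^^ k) x) ` {n..}))"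

end

theory Submission
  imports Defs
begin

text \<open>The example is a subshift of \<open>{0,1}\<^sup>\<nat>\<close>: the sequences whose switches (positions \<open>n\<close> with
  \<open>x n \<noteq> x (n + 1)\<close>) all have the same parity and are sparse, in the sense that any \<open>k\<^sup>2\<close>
  consecutive positions contain at most \<open>k\<close> switches.

  Gluing a prefix of one point to a prefix of another across a long constant stretch shows that
  every hitting time set \<open>N(U, V)\<close> contains all large times of one parity. Sparsity forces every
  point to have arbitrarily long runs of some symbol \<open>c\<close>, and then the fixed point \<open>c\<^sup>\<infinity>\<close> lies
  in \<open>\<omega>\<^sub>\<N>(x)\<close>; the two fixed points are at distance 1. The parity constraint makes the hitting
  times from "switch at 0" to "switch at 0" even and to "switch at 1" odd, so the square of the
  shift is not transitive.

  For \<open>x\<^sub>0\<close> switching exactly at the times \<open>2j\<^sup>2\<close>, the orbit along even times only sees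
  sequences whose switches are even and along odd times sequences whose switches are odd; hence
  \<open>\<omega>\<^sub>\<N>(x\<^sub>0) = {0\<^sup>\<infinity>, 1\<^sup>\<infinity>}\<close>. This is no \<open>\<omega>(x)\<close>: an eventually constant orbit has a
  one-symbol limit set, and otherwise compactness yields a limit point with a switch at 0.
  Finally everything is carried over to \<open>\<real>\<close> along a bijection \<open>2\<^sup>\<nat> \<cong> \<real>\<close>, pulling the
  metric back.\<close>

section \<open>The Cantor metric on sequences\<close>

definition agree_upto :: "(nat \<Rightarrow> 'a) \<Rightarrow> (nat \<Rightarrow> 'a) \<Rightarrow> nat \<Rightarrow> bool" where
  "agree_upto x y L \<longleftrightarrow> (\<forall>k<L. x k = y k)"

definition cantor_dist :: "(nat \<Rightarrow> 'a) \<Rightarrow> (nat \<Rightarrow> 'a) \<Rightarrow> real" where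
  "cantor_dist x y = (if x = y then 0 else (1/2) ^ (LEAST n. x n \<noteq> y n))"

lemma agree_upto_mono: "agree_upto x y L \<Longrightarrow> L' \<le> L \<Longrightarrow> agree_upto x y L'"
  by (auto simp: agree_upto_def)

lemma agree_upto_iff_le_difference:
  "agree_upto x y n \<Longrightarrow> x n \<noteq> y n \<Longrightarrow> agree_upto x y L \<longleftrightarrow> L \<le> n"
  unfolding agree_upto_def by (metis not_le order_less_le_trans)

lemma cantor_dist_first_difference:
  assumes "x \<noteq> y"
  obtains n where "cantor_dist x y = (1/2)^n" "agree_upto x y n" "x n \<noteq> y n"
proof -
  obtain m where "x m \<noteq> y m" using assms by auto
  define n where "n = (LEAST n. x n \<noteq> y n)"
  have "x n \<noteq> y n" unfolding n_def by (rule LeastI) fact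
  moreover have "agree_upto x y n" unfolding agree_upto_def n_def using not_less_Least by blast
  moreover have "cantor_dist x y = (1/2)^n" using assms by (simp add: cantor_dist_def n_def)
  ultimately show ?thesis using that by blast
qed

lemma cantor_dist_le_iff: "cantor_dist x y \<le> (1/2)^L \<longleftrightarrow> agree_upto x y L"
proof (cases "x = y")
  case False
  then obtain n where "cantor_dist x y = (1/2)^n" "agree_upto x y n" "x n \<noteq> y n"
    by (rule cantor_dist_first_difference)
  then show ?thesis using agree_upto_iff_le_difference[of x y n L] by (simp add: power_decreasing_iff)
qed (simp add: cantor_dist_def agree_upto_def)

lemma cantor_dist_less_iff: "cantor_dist x y < (1/2)^L \<longleftrightarrow> agree_upto x y (Suc L)"
proof (cases "x = y")
  case False
  then obtain n where "cantor_dist x y = (1/2)^n" "agree_upto x y n" "x n \<noteq> y n"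
    by (rule cantor_dist_first_difference)
  then show ?thesis
    using agree_upto_iff_le_difference[of x y n "Suc L"] by (simp add: power_strict_decreasing_iff Suc_le_eq)
qed (simp add: cantor_dist_def agree_upto_def)

lemma cantor_dist_self [simp]: "cantor_dist x x = 0"
  by (simp add: cantor_dist_def)

lemma cantor_dist_nonneg: "0 \<le> cantor_dist x y"
  by (simp add: cantor_dist_def)

lemma cantor_dist_ultrametric: "cantor_dist x z \<le> max (cantor_dist x y) (cantor_dist y z)"
proof (cases "x = z")
  case False
  then obtain n where n: "cantor_dist x z = (1/2)^n" "x n \<noteq> z n"
    by (rule cantor_dist_first_difference)
  then have "\<not> agree_upto x y (Suc n) \<or> \<not> agree_upto y z (Suc n)"
    by (auto simp: agree_upto_def)
  then have "(1/2)^n \<le> cantor_dist x y \<or> (1/2)^n \<le> cantor_dist y z"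
    by (simp add: cantor_dist_less_iff[symmetric] not_less)
  then show ?thesis using n(1) by linarith
qed (simp add: cantor_dist_nonneg le_max_iff_disj)

lemma Metric_space_cantor_dist: "Metric_space S cantor_dist"
proof
  show "0 \<le> cantor_dist x y" for x y :: "nat \<Rightarrow> 'a"
    by (rule cantor_dist_nonneg)
  show "cantor_dist x y = cantor_dist y x" for x y :: "nat \<Rightarrow> 'a"
    unfolding cantor_dist_def by (auto simp: eq_commute)
  show "cantor_dist x y = 0 \<longleftrightarrow> x = y" for x y :: "nat \<Rightarrow> 'a"
    by (simp add: cantor_dist_def)
  show "cantor_dist x z \<le> cantor_dist x y + cantor_dist y z" for x y z :: "nat \<Rightarrow> 'a"
    using cantor_dist_ultrametric[of x z y] cantor_dist_nonneg[of x y] cantor_dist_nonneg[of y z]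
    by (metis add_increasing add_increasing2 max_def order_trans)
qed

abbreviation cantor_topology :: "(nat \<Rightarrow> 'a) set \<Rightarrow> (nat \<Rightarrow> 'a) topology" where
  "cantor_topology S \<equiv> Metric_space.mtopology S cantor_dist"

lemma exists_half_power_less: "0 < (r::real) \<Longrightarrow> \<exists>L. (1/2)^L < r"
  by (rule real_arch_pow_inv) auto

lemma openin_cantor_topology:
  "openin (cantor_topology S) U \<longleftrightarrow> U \<subseteq> S \<and> (\<forall>x\<in>U. \<exists>L. \<forall>y\<in>S. agree_upto x y L \<longrightarrow> y \<in> U)"
proof -
  interpret Metric_space S cantor_dist by (rule Metric_space_cantor_dist)
  have "(\<exists>r>0. mball x r \<subseteq> U) \<longleftrightarrow> (\<exists>L. \<forall>y\<in>S. agree_upto x y L \<longrightarrow> y \<in> U)" if "x \<in> S" for x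
  proof
    assume "\<exists>r>0. mball x r \<subseteq> U"
    then obtain r where r: "r > 0" "mball x r \<subseteq> U" by blast
    obtain L where L: "(1/2)^L < r" using r(1) exists_half_power_less by blast
    have "y \<in> U" if "y \<in> S" "agree_upto x y L" for y
      using that \<open>x \<in> S\<close> r(2) L cantor_dist_le_iff[of x y L] by (force simp: in_mball)
    then show "\<exists>L. \<forall>y\<in>S. agree_upto x y L \<longrightarrow> y \<in> U" by blast
  next
    assume "\<exists>L. \<forall>y\<in>S. agree_upto x y L \<longrightarrow> y \<in> U"
    then obtain L where L: "\<forall>y\<in>S. agree_upto x y L \<longrightarrow> y \<in> U" by blast
    have "mball x ((1/2)^L) \<subseteq> U"
      using L agree_upto_mono[of x _ "Suc L" L] by (auto simp: in_mball cantor_dist_less_iff)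
    then show "\<exists>r>0. mball x r \<subseteq> U" by (intro exI[of _ "(1/2)^L"]) auto
  qed
  then show ?thesis unfolding openin_mtopology by blast
qed

lemma in_closure_of_cantor_topology:
  assumes "y \<in> S" and "\<And>L. \<exists>a\<in>A \<inter> S. agree_upto y a L"
  shows "y \<in> cantor_topology S closure_of A"
proof -
  interpret Metric_space S cantor_dist by (rule Metric_space_cantor_dist)
  have "\<exists>a\<in>A. a \<in> mball y r" if r: "r > 0" for r
  proof -
    obtain L where L: "(1/2)^L < r" using r exists_half_power_less by blast
    obtain a where "a \<in> A \<inter> S" "agree_upto y a L" using assms(2) by blast
    then show ?thesis using L assms(1) cantor_dist_le_iff[of y a L] by (force simp: in_mball)
  qed
  then show ?thesis unfolding metric_closure_of using assms(1) by blast
qed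

definition depends_on_prefix :: "nat \<Rightarrow> ((nat \<Rightarrow> 'a) \<Rightarrow> bool) \<Rightarrow> bool" where
  "depends_on_prefix L P \<longleftrightarrow> (\<forall>x y. agree_upto x y L \<longrightarrow> P x = P y)"

lemma openin_cantor_topology_prefix:
  "depends_on_prefix L P \<Longrightarrow> openin (cantor_topology S) {x\<in>S. P x}"
  unfolding openin_cantor_topology depends_on_prefix_def by blast

lemma closedin_cantor_topology_prefix:
  assumes "depends_on_prefix L P"
  shows "closedin (cantor_topology S) {x\<in>S. P x}"
proof -
  have "openin (cantor_topology S) {x\<in>S. \<not> P x}"
    using assms by (intro openin_cantor_topology_prefix[of L]) (simp add: depends_on_prefix_def)
  moreover have "S - {x\<in>S. P x} = {x\<in>S. \<not> P x}" by auto
  ultimately show ?thesis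
    by (simp add: closedin_def Metric_space.topspace_mtopology[OF Metric_space_cantor_dist])
qed

abbreviation discrete_product_topology :: "(nat \<Rightarrow> 'a) topology" where
  "discrete_product_topology \<equiv> product_topology (\<lambda>_. discrete_topology UNIV) UNIV"

lemma topspace_discrete_product_topology [simp]: "topspace discrete_product_topology = UNIV"
  by (auto simp: PiE_def extensional_def)

lemma openin_discrete_product_agree_upto:
  "openin discrete_product_topology {x. agree_upto y x L}"
proof (induction L)
  case 0
  then show ?case using openin_topspace[of discrete_product_topology] by (simp add: agree_upto_def)
next
  case (Suc L)
  have "openin discrete_product_topology {x \<in> topspace discrete_product_topology. x L \<in> {y L}}"
    by (rule openin_continuous_map_preimage[OF continuous_map_product_projection]) auto
  moreover have "{x. agree_upto y x (Suc L)} = {x. agree_upto y x L} \<inter> {x. x L = y L}"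
    by (auto simp: agree_upto_def less_Suc_eq)
  ultimately show ?case using Suc by auto
qed

lemma openin_discrete_product_prefix:
  assumes "depends_on_prefix L P"
  shows "openin discrete_product_topology {x. P x}"
proof -
  have "{x. P x} = (\<Union>y\<in>{y. P y}. {x. agree_upto y x L})"
    using assms by (auto simp: depends_on_prefix_def agree_upto_def)
  moreover have "openin discrete_product_topology (\<Union>y\<in>{y. P y}. {x. agree_upto y x L})"
    by (rule openin_Union) (auto simp: openin_discrete_product_agree_upto)
  ultimately show ?thesis by simp
qed

lemma closedin_discrete_product_prefix:
  assumes "depends_on_prefix L P"
  shows "closedin discrete_product_topology {x. P x}"
proof -
  have "openin discrete_product_topology {x. \<not> P x}"
    using assms by (intro openin_discrete_product_prefix[of L]) (simp add: depends_on_prefix_def)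
  then show ?thesis by (simp add: closedin_def Collect_neg_eq Compl_eq_Diff_UNIV)
qed

lemma continuous_map_discrete_product_cantor:
  "continuous_map (subtopology discrete_product_topology S) (cantor_topology S) id"
  unfolding continuous_map_def
proof (intro conjI allI impI)
  show "id \<in> topspace (subtopology discrete_product_topology S) \<rightarrow> topspace (cantor_topology S)"
    by (auto simp: Metric_space.topspace_mtopology[OF Metric_space_cantor_dist])
  fix U assume "openin (cantor_topology S) U"
  then have U: "U \<subseteq> S" "\<forall>x\<in>U. \<exists>L. \<forall>y\<in>S. agree_upto x y L \<longrightarrow> y \<in> U"
    by (auto simp: openin_cantor_topology)
  define W where "W = \<Union>{{y. agree_upto x y L} | x L. x \<in> U \<and> (\<forall>y\<in>S. agree_upto x y L \<longrightarrow> y \<in> U)}"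
  have "openin discrete_product_topology W"
    unfolding W_def using openin_discrete_product_agree_upto by auto
  moreover have "U = W \<inter> S"
  proof
    show "U \<subseteq> W \<inter> S"
    proof
      fix x assume x: "x \<in> U"
      then obtain L where "\<forall>y\<in>S. agree_upto x y L \<longrightarrow> y \<in> U" using U(2) by blast
      then show "x \<in> W \<inter> S" using x U(1) unfolding W_def by (auto simp: agree_upto_def)
    qed
    show "W \<inter> S \<subseteq> U" unfolding W_def by auto
  qed
  ultimately show "openin (subtopology discrete_product_topology S)
      {x \<in> topspace (subtopology discrete_product_topology S). id x \<in> U}"
    using U(1) by (auto simp: openin_subtopology)
qed

lemma compact_space_cantor_topology:
  fixes S :: "(nat \<Rightarrow> 'a::finite) set"
  assumes "closedin discrete_product_topology S"
  shows "compact_space (cantor_topology S)"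
proof -
  have "compact_space (discrete_product_topology :: (nat \<Rightarrow> 'a) topology)"
    by (simp add: compact_space_product_topology compact_space_discrete_topology)
  then have "compact_space (subtopology discrete_product_topology S)"
    using assms closedin_compact_space compact_space_subtopology by blast
  then have "compactin (cantor_topology S) (id ` topspace (subtopology discrete_product_topology S))"
    using continuous_map_discrete_product_cantor image_compactin compact_space_def by blast
  then show ?thesis
    by (simp add: compact_space_def Metric_space.topspace_mtopology[OF Metric_space_cantor_dist])
qed

section \<open>Sequences with sparse switches of one parity\<close>

definition switch :: "(nat \<Rightarrow> 'a) \<Rightarrow> nat \<Rightarrow> bool" where
  "switch x n \<longleftrightarrow> x n \<noteq> x (Suc n)"

definition switches_have_parity :: "(nat \<Rightarrow> 'a) \<Rightarrow> nat \<Rightarrow> bool" where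
  "switches_have_parity x p \<longleftrightarrow> (\<forall>i. switch x i \<longrightarrow> even (i + p))"

definition sparse :: "nat set \<Rightarrow> bool" where
  "sparse C \<longleftrightarrow> (\<forall>i k. card (C \<inter> {i..<i + k*k}) \<le> k)"

definition sparse_seqs :: "(nat \<Rightarrow> bool) set" where
  "sparse_seqs = {x. (\<forall>i j. switch x i \<longrightarrow> switch x j \<longrightarrow> even (i + j)) \<and> sparse {n. switch x n}}"

definition shift :: "(nat \<Rightarrow> 'a) \<Rightarrow> nat \<Rightarrow> 'a" where
  "shift x = (\<lambda>n. x (Suc n))"

lemma sparse_subset: "sparse C \<Longrightarrow> B \<subseteq> C \<Longrightarrow> sparse B"
  unfolding sparse_def by (meson card_mono finite_Int finite_atLeastLessThan Int_mono order_refl order_trans)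

lemma sparse_empty: "sparse {}"
  by (simp add: sparse_def)

lemma sparse_singleton: "sparse {s}"
  unfolding sparse_def
proof (intro allI)
  fix i k
  show "card ({s} \<inter> {i..<i + k * k}) \<le> k"
  proof (cases "k = 0")
    case False
    have "card ({s} \<inter> {i..<i + k * k}) \<le> card {s}" by (rule card_mono) auto
    then show ?thesis using False by simp
  qed simp
qed

lemma sparse_image_add:
  assumes "sparse C"
  shows "sparse ((\<lambda>c. c + n) ` C)"
  unfolding sparse_def
proof (intro allI)
  fix i k
  have "(\<lambda>c. c + n) ` C \<inter> {i..<i + k * k} \<subseteq> (\<lambda>c. c + n) ` (C \<inter> {i-n..<i-n + k * k})"
  proof
    fix z assume "z \<in> (\<lambda>c. c + n) ` C \<inter> {i..<i + k * k}"
    then obtain c where "c \<in> C" "z = c + n" "i \<le> c + n" "c + n < i + k * k" by auto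
    then show "z \<in> (\<lambda>c. c + n) ` (C \<inter> {i-n..<i-n + k * k})" by (auto intro!: image_eqI[of _ _ c])
  qed
  then have "card ((\<lambda>c. c + n) ` C \<inter> {i..<i + k * k})
      \<le> card ((\<lambda>c. c + n) ` (C \<inter> {i-n..<i-n + k * k}))"
    by (intro card_mono) auto
  also have "\<dots> \<le> card (C \<inter> {i-n..<i-n + k * k})" by (rule card_image_le) auto
  also have "\<dots> \<le> k" using assms by (simp add: sparse_def)
  finally show "card ((\<lambda>c. c + n) ` C \<inter> {i..<i + k * k}) \<le> k" .
qed

lemma sparse_preimage_add:
  assumes "sparse C"
  shows "sparse {c. c + n \<in> C}"
  unfolding sparse_def
proof (intro allI)
  fix i k
  have "card ({c. c + n \<in> C} \<inter> {i..<i + k * k})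
      = card ((\<lambda>c. c + n) ` ({c. c + n \<in> C} \<inter> {i..<i + k * k}))"
    by (rule card_image[symmetric]) (auto simp: inj_on_def)
  also have "\<dots> \<le> card (C \<inter> {i+n..<i+n + k * k})" by (intro card_mono) auto
  also have "\<dots> \<le> k" using assms by (simp add: sparse_def)
  finally show "card ({c. c + n \<in> C} \<inter> {i..<i + k * k}) \<le> k" .
qed

text \<open>A window of length \<open>k\<^sup>2\<close> meeting both \<open>A\<close> and \<open>B\<close> is longer than the gap \<open>K\<^sup>2\<close>,
  so \<open>k > K \<ge> card (A \<union> B)\<close>.\<close>
lemma sparse_Un_separated:
  assumes "sparse A" "sparse B" "finite (A \<union> B)" "card (A \<union> B) \<le> K"
    and sep: "\<And>a b. a \<in> A \<Longrightarrow> b \<in> B \<Longrightarrow> a + K*K < b"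
  shows "sparse (A \<union> B)"
  unfolding sparse_def
proof (intro allI)
  fix i k
  let ?W = "{i..<i + k * k} :: nat set"
  show "card ((A \<union> B) \<inter> ?W) \<le> k"
  proof (cases "A \<inter> ?W = {} \<or> B \<inter> ?W = {}")
    case True
    then have "(A \<union> B) \<inter> ?W = B \<inter> ?W \<or> (A \<union> B) \<inter> ?W = A \<inter> ?W" by auto
    then show ?thesis using assms(1,2) unfolding sparse_def by metis
  next
    case False
    then obtain a b where "a \<in> A" "b \<in> B" "a \<in> ?W" "b \<in> ?W" by blast
    then have "K*K < k*k" using sep[of a b] by auto
    then have "K < k" by (meson mult_le_mono not_less)
    moreover have "card ((A \<union> B) \<inter> ?W) \<le> card (A \<union> B)" using assms(3) by (intro card_mono) auto
    ultimately show ?thesis using assms(4) by linarith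
  qed
qed

lemma funpow_shift: "(shift ^^ n) x = (\<lambda>k. x (k + n))"
  by (induction n) (simp_all add: shift_def)

lemma switch_funpow_shift: "switch ((shift ^^ n) x) m = switch x (m + n)"
  by (simp add: funpow_shift switch_def)

lemma agree_upto_switch:
  assumes "agree_upto x y L" "Suc n < L"
  shows "switch x n = switch y n"
proof -
  have "x n = y n" "x (Suc n) = y (Suc n)"
    using assms by (auto simp: agree_upto_def)
  then show ?thesis by (simp add: switch_def)
qed

lemma depends_on_prefix_switch: "depends_on_prefix (Suc (Suc n)) (\<lambda>y. P (switch y n))"
  unfolding depends_on_prefix_def
proof (intro allI impI)
  fix x y :: "nat \<Rightarrow> 'a" assume "agree_upto x y (Suc (Suc n))"
  then have "switch x n = switch y n" by (rule agree_upto_switch) simp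
  then show "P (switch x n) = P (switch y n)" by simp
qed

lemma sparse_seqsI:
  "(\<And>i j. switch x i \<Longrightarrow> switch x j \<Longrightarrow> even (i + j)) \<Longrightarrow> sparse {n. switch x n} \<Longrightarrow> x \<in> sparse_seqs"
  unfolding sparse_seqs_def by blast

lemma sparse_seqs_switch_parity: "x \<in> sparse_seqs \<Longrightarrow> switch x i \<Longrightarrow> switch x j \<Longrightarrow> even (i + j)"
  unfolding sparse_seqs_def by (simp del: even_add)

lemma sparse_seqs_sparse: "x \<in> sparse_seqs \<Longrightarrow> sparse {n. switch x n}"
  unfolding sparse_seqs_def by blast

lemma sparse_seqs_switches_have_parity:
  assumes "x \<in> sparse_seqs"
  obtains p where "switches_have_parity x p"
proof (cases "\<exists>p. switch x p")
  case True
  then obtain p where p: "switch x p" by blast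
  have "switches_have_parity x p"
    unfolding switches_have_parity_def using sparse_seqs_switch_parity[OF assms _ p] by blast
  then show ?thesis by (rule that)
next
  case False
  then have "switches_have_parity x 0" by (simp add: switches_have_parity_def)
  then show ?thesis by (rule that)
qed

lemma funpow_shift_in_sparse_seqs:
  assumes x: "x \<in> sparse_seqs"
  shows "(shift ^^ n) x \<in> sparse_seqs"
proof (rule sparse_seqsI)
  fix i j assume "switch ((shift ^^ n) x) i" "switch ((shift ^^ n) x) j"
  then have "switch x (i + n)" "switch x (j + n)" by (simp_all add: switch_funpow_shift)
  then have "even (i + n + (j + n))" using sparse_seqs_switch_parity[OF x] by blast
  then show "even (i + j)" by presburger
next
  have "{m. switch ((shift ^^ n) x) m} = {c. c + n \<in> {m. switch x m}}"
    by (simp add: switch_funpow_shift)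
  then show "sparse {m. switch ((shift ^^ n) x) m}"
    using sparse_preimage_add[OF sparse_seqs_sparse[OF x]] by simp
qed

lemma shift_in_sparse_seqs: "x \<in> sparse_seqs \<Longrightarrow> shift x \<in> sparse_seqs"
  using funpow_shift_in_sparse_seqs[of x 1] by simp

lemma shift_image_sparse_seqs: "shift ` sparse_seqs = sparse_seqs"
proof
  show "shift ` sparse_seqs \<subseteq> sparse_seqs" using shift_in_sparse_seqs by blast
  show "sparse_seqs \<subseteq> shift ` sparse_seqs"
  proof
    fix x assume x: "x \<in> sparse_seqs"
    define y where "y = (\<lambda>n. case n of 0 \<Rightarrow> x 0 | Suc k \<Rightarrow> x k)"
    have switch_y_0: "\<not> switch y 0" and switch_y_Suc: "switch y (Suc k) = switch x k" for k
      by (simp_all add: y_def switch_def)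
    have switch_y_nonzero: "m \<noteq> 0" if "switch y m" for m
      using that switch_y_0 by (cases m) simp_all
    have switches_y: "{m. switch y m} = (\<lambda>c. c + 1) ` {m. switch x m}"
    proof (intro set_eqI iffI)
      fix m assume "m \<in> {m. switch y m}"
      then show "m \<in> (\<lambda>c. c + 1) ` {m. switch x m}"
        using switch_y_0 switch_y_Suc by (cases m) auto
    next
      fix m assume "m \<in> (\<lambda>c. c + 1) ` {m. switch x m}"
      then obtain k where "m = Suc k" "switch x k" by auto
      then show "m \<in> {m. switch y m}" using switch_y_Suc by simp
    qed
    have "y \<in> sparse_seqs"
    proof (rule sparse_seqsI)
      fix i j assume i: "switch y i" and j: "switch y j"
      obtain i' j' where ij: "i = Suc i'" "j = Suc j'" using i j switch_y_nonzero by (meson not0_implies_Suc)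
      then have "switch x i'" "switch x j'" using i j switch_y_Suc by auto
      then have "even (i' + j')" by (rule sparse_seqs_switch_parity[OF x])
      then show "even (i + j)" using ij by simp
    next
      show "sparse {m. switch y m}"
        unfolding switches_y by (rule sparse_image_add[OF sparse_seqs_sparse[OF x]])
    qed
    moreover have "shift y = x" by (simp add: shift_def y_def)
    ultimately show "x \<in> shift ` sparse_seqs" by blast
  qed
qed

lemma const_in_sparse_seqs: "(\<lambda>_. c) \<in> sparse_seqs"
  by (rule sparse_seqsI) (auto simp: switch_def sparse_empty)

lemma switch_step_iff: "switch (\<lambda>k. n < k) m \<longleftrightarrow> m = n"
  by (auto simp: switch_def)

lemma step_in_sparse_seqs: "(\<lambda>k. n < k) \<in> sparse_seqs"
  by (rule sparse_seqsI) (simp_all add: switch_step_iff sparse_singleton)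

lemma closedin_discrete_product_sparse_seqs: "closedin discrete_product_topology sparse_seqs"
proof -
  have parity: "depends_on_prefix (Suc (Suc (max i j)))
      (\<lambda>x::nat \<Rightarrow> bool. switch x i \<longrightarrow> switch x j \<longrightarrow> even (i + j))" for i j
    unfolding depends_on_prefix_def
  proof (intro allI impI)
    fix x y :: "nat \<Rightarrow> bool" assume "agree_upto x y (Suc (Suc (max i j)))"
    then have "switch x i = switch y i" "switch x j = switch y j"
      by (simp_all add: agree_upto_switch)
    then show "(switch x i \<longrightarrow> switch x j \<longrightarrow> even (i + j))
        = (switch y i \<longrightarrow> switch y j \<longrightarrow> even (i + j))" by simp
  qed
  have window: "depends_on_prefix (Suc (i + k*k))
      (\<lambda>x::nat \<Rightarrow> bool. card ({n. switch x n} \<inter> {i..<i + k*k}) \<le> k)" for i k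
    unfolding depends_on_prefix_def
  proof (intro allI impI)
    fix x y :: "nat \<Rightarrow> bool" assume "agree_upto x y (Suc (i + k*k))"
    then have "{n. switch x n} \<inter> {i..<i + k*k} = {n. switch y n} \<inter> {i..<i + k*k}"
      using agree_upto_switch[of x y "Suc (i + k*k)"] by auto
    then show "(card ({n. switch x n} \<inter> {i..<i + k*k}) \<le> k)
        = (card ({n. switch y n} \<inter> {i..<i + k*k}) \<le> k)" by simp
  qed
  have eq: "sparse_seqs = (\<Inter>i. \<Inter>j. {x. switch x i \<longrightarrow> switch x j \<longrightarrow> even (i + j)})
      \<inter> (\<Inter>i. \<Inter>k. {x. card ({n. switch x n} \<inter> {i..<i + k*k}) \<le> k})"
    by (auto simp: sparse_seqs_def sparse_def)
  have "closedin discrete_product_topology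
      (\<Inter>i. \<Inter>j. {x::nat \<Rightarrow> bool. switch x i \<longrightarrow> switch x j \<longrightarrow> even (i + j)})"
    by (intro closedin_INT UNIV_not_empty closedin_discrete_product_prefix[OF parity])
  moreover have "closedin discrete_product_topology
      (\<Inter>i. \<Inter>k. {x::nat \<Rightarrow> bool. card ({n. switch x n} \<inter> {i..<i + k*k}) \<le> k})"
    by (intro closedin_INT UNIV_not_empty closedin_discrete_product_prefix[OF window])
  ultimately show ?thesis unfolding eq by (rule closedin_Int)
qed

lemma compact_space_sparse_seqs: "compact_space (cantor_topology sparse_seqs)"
  by (rule compact_space_cantor_topology[OF closedin_discrete_product_sparse_seqs])

section \<open>Dynamics of the shift\<close>

definition glue :: "(nat \<Rightarrow> 'a) \<Rightarrow> (nat \<Rightarrow> 'a) \<Rightarrow> nat \<Rightarrow> nat \<Rightarrow> nat \<Rightarrow> nat \<Rightarrow> 'a" where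
  "glue a b L s n k =
     (if k < L then a k else if k < s then a (L - 1) else if k < n then b 0
      else if k < n + L then b (k - n) else b (L - 1))"

lemma switch_glue_iff:
  assumes "1 \<le> L" "L < s" "s < n"
  shows "switch (glue a b L s n) m \<longleftrightarrow>
     (Suc m < L \<and> switch a m) \<or> (m = s - 1 \<and> a (L - 1) \<noteq> b 0) \<or>
     (n \<le> m \<and> Suc m < n + L \<and> switch b (m - n))"
proof -
  consider "Suc m < L" | "Suc m = L" | "L \<le> m" "Suc m < s" | "Suc m = s" | "s \<le> m" "Suc m < n"
    | "Suc m = n" | "n \<le> m" "Suc m < n + L" | "Suc m = n + L" | "n + L \<le> m"
    by linarith
  then show ?thesis
  proof cases
    case 7
    then have "Suc m - n = Suc (m - n)" by auto
    with 7 assms show ?thesis by (auto simp: switch_def glue_def)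
  next
    case 8
    then have "m - n = L - 1" by auto
    with 8 assms show ?thesis by (auto simp: switch_def glue_def)
  qed (use assms in \<open>auto simp: switch_def glue_def\<close>)
qed

lemma card_switches_prefix: "card {m. Suc m < L \<and> switch a m} \<le> L"
  by (rule order_trans[OF card_mono[of "{..<L}"]]) auto

text \<open>\<open>K = 2L + 1\<close> bounds the number of switches of the glued sequence, so the gaps of
  length \<open>K\<^sup>2\<close> between its three blocks of switches keep it sparse.\<close>
lemma sparse_switches_glue:
  assumes a: "a \<in> sparse_seqs" and b: "b \<in> sparse_seqs" and L: "1 \<le> L" and K: "K = 2*L + 1"
    and s: "L + K*K < s" and n: "s + K*K \<le> n"
  shows "sparse {m. switch (glue a b L s n) m}"
proof -
  define A where "A = {m. Suc m < L \<and> switch a m}"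
  define B1 where "B1 = (if a (L - 1) \<noteq> b 0 then {s - 1} else {})"
  define B2 where "B2 = (\<lambda>c. c + n) ` {m. Suc m < L \<and> switch b m}"
  have "{m. n \<le> m \<and> Suc m < n + L \<and> switch b (m - n)} = B2"
    unfolding B2_def by (auto intro!: image_eqI[where x="m - n" for m])
  then have switches: "{m. switch (glue a b L s n) m} = A \<union> (B1 \<union> B2)"
    using switch_glue_iff[OF L, of s n a b] s n K unfolding A_def B1_def by auto
  have fin_prefix: "finite {m. Suc m < L \<and> switch c m}" for c :: "nat \<Rightarrow> bool"
    by (rule finite_subset[of _ "{..<L}"]) auto
  have fin: "finite A" "finite B1" "finite B2"
    unfolding A_def B1_def B2_def by (simp_all add: fin_prefix)
  have card: "card A \<le> L" "card B1 \<le> 1" "card B2 \<le> L"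
    unfolding A_def B1_def B2_def
    using card_switches_prefix[of L a] card_switches_prefix[of L b]
      card_image_le[OF fin_prefix[of b], of "\<lambda>c. c + n"]
    by auto
  have sparse_A: "sparse A" and sparse_B1: "sparse B1" and sparse_B2: "sparse B2"
    unfolding A_def B1_def B2_def
    using sparse_seqs_sparse[OF a] sparse_seqs_sparse[OF b]
    by (auto intro: sparse_subset sparse_image_add simp: sparse_singleton sparse_empty)
  have "sparse (B1 \<union> B2)"
  proof (rule sparse_Un_separated[OF sparse_B1 sparse_B2])
    show "card (B1 \<union> B2) \<le> K" using card_Un_le[of B1 B2] card K by linarith
    show "a' + K*K < b'" if "a' \<in> B1" "b' \<in> B2" for a' b'
      using that n s unfolding B1_def B2_def by (auto split: if_splits)
  qed (use fin in auto)
  then show ?thesis unfolding switches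
  proof (rule sparse_Un_separated[OF sparse_A])
    show "card (A \<union> (B1 \<union> B2)) \<le> K"
      using card_Un_le[of A "B1 \<union> B2"] card_Un_le[of B1 B2] card K by linarith
    show "a' + K*K < b'" if "a' \<in> A" "b' \<in> B1 \<union> B2" for a' b'
      using that s n unfolding A_def B1_def B2_def by (auto split: if_splits)
  qed (use fin in auto)
qed

lemma glue_in_sparse_seqs:
  assumes a: "a \<in> sparse_seqs" and b: "b \<in> sparse_seqs" and L: "1 \<le> L" and K: "K = 2*L + 1"
    and s: "L + K*K < s" and n: "s + K*K \<le> n"
    and pa: "switches_have_parity a p" and pb: "switches_have_parity b q"
    and ps: "even (s - 1 + p)" and pn: "even (n + q + p)"
  shows "glue a b L s n \<in> sparse_seqs"
proof (rule sparse_seqsI)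
  have parity: "even (m + p)" if "switch (glue a b L s n) m" for m
  proof -
    have "L < s" "s < n" using s n K by auto
    then have "switch a m \<or> m = s - 1 \<or> (n \<le> m \<and> switch b (m - n))"
      using that switch_glue_iff[OF L] by blast
    then consider "switch a m" | "m = s - 1" | "n \<le> m" "switch b (m - n)" by blast
    then show ?thesis
    proof cases
      case 1
      then show ?thesis using pa unfolding switches_have_parity_def by blast
    next
      case 2
      then show ?thesis using ps by simp
    next
      case 3
      then have "even (m - n + q)" using pb unfolding switches_have_parity_def by blast
      then show ?thesis using pn 3(1) by presburger
    qed
  qed
  show "even (i + j)" if "switch (glue a b L s n) i" "switch (glue a b L s n) j" for i j
    using parity[OF that(1)] parity[OF that(2)] by presburger
  show "sparse {m. switch (glue a b L s n) m}"
    by (rule sparse_switches_glue[OF a b L K s n])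
qed

text \<open>The witness for time \<open>n\<close> glues a prefix of a point of \<open>U\<close> to a prefix, placed at
  position \<open>n\<close>, of a point of \<open>V\<close>; only the parity of \<open>n\<close> is constrained.\<close>
lemma hitting_times_shift_parity:
  assumes U: "opene sparse_seqs cantor_dist U" and V: "opene sparse_seqs cantor_dist V"
  obtains M r where "\<And>n. M \<le> n \<Longrightarrow> even (n + r) \<Longrightarrow> n \<in> hitting_times shift U V"
proof -
  have U': "U \<subseteq> sparse_seqs" "\<forall>x\<in>U. \<exists>L. \<forall>y\<in>sparse_seqs. agree_upto x y L \<longrightarrow> y \<in> U"
    and V': "V \<subseteq> sparse_seqs" "\<forall>x\<in>V. \<exists>L. \<forall>y\<in>sparse_seqs. agree_upto x y L \<longrightarrow> y \<in> V"
    using U V by (auto simp: opene_def openin_cantor_topology)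
  obtain a b where "a \<in> U" "b \<in> V" using U V by (auto simp: opene_def)
  then obtain La Lb where La: "\<forall>y\<in>sparse_seqs. agree_upto a y La \<longrightarrow> y \<in> U"
    and Lb: "\<forall>y\<in>sparse_seqs. agree_upto b y Lb \<longrightarrow> y \<in> V"
    using U'(2) V'(2) by blast
  have a: "a \<in> sparse_seqs" and b: "b \<in> sparse_seqs" using \<open>a \<in> U\<close> \<open>b \<in> V\<close> U' V' by auto
  obtain p q where pa: "switches_have_parity a p" and pb: "switches_have_parity b q"
    using sparse_seqs_switches_have_parity a b by metis
  define L where "L = Suc (max La Lb)"
  define K where "K = 2*L + 1"
  define s where "s = L + K*K + 1 + (if even (L + K*K + p) then 0 else 1)"
  have L: "1 \<le> L" and s: "L + K*K < s" and ps: "even (s - 1 + p)"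
    unfolding L_def s_def by auto
  have "n \<in> hitting_times shift U V" if n: "s + K*K \<le> n" and pn: "even (n + (q + p))" for n
  proof -
    define z where "z = glue a b L s n"
    have z: "z \<in> sparse_seqs" unfolding z_def
      using pn by (intro glue_in_sparse_seqs[OF a b L K_def s n pa pb ps]) (simp add: add.assoc)
    have "L < s" "s < n" using s n K_def by auto
    then have "agree_upto a z La" "agree_upto b ((shift ^^ n) z) Lb"
      unfolding agree_upto_def z_def glue_def funpow_shift L_def by auto
    then have "z \<in> U" "(shift ^^ n) z \<in> V"
      using La Lb z funpow_shift_in_sparse_seqs[OF z] by blast+
    then show ?thesis unfolding hitting_times_def by blast
  qed
  then show ?thesis using that by blast
qed

lemma continuous_map_shift:
  assumes "shift ` S \<subseteq> S"
  shows "continuous_map (cantor_topology S) (cantor_topology S) shift"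
  unfolding continuous_map_def
proof (intro conjI allI impI)
  show "shift \<in> topspace (cantor_topology S) \<rightarrow> topspace (cantor_topology S)"
    using assms by (auto simp: Metric_space.topspace_mtopology[OF Metric_space_cantor_dist])
  fix U assume "openin (cantor_topology S) U"
  then have U: "U \<subseteq> S" "\<forall>x\<in>U. \<exists>L. \<forall>y\<in>S. agree_upto x y L \<longrightarrow> y \<in> U"
    by (auto simp: openin_cantor_topology)
  have "\<exists>L. \<forall>y\<in>S. agree_upto x y L \<longrightarrow> shift y \<in> U" if sx: "shift x \<in> U" for x
  proof -
    obtain L where L: "\<forall>y\<in>S. agree_upto (shift x) y L \<longrightarrow> y \<in> U" using U(2) sx by blast
    have "shift y \<in> U" if "y \<in> S" "agree_upto x y (Suc L)" for y
      using L that assms by (auto simp: agree_upto_def shift_def)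
    then show ?thesis by blast
  qed
  then show "openin (cantor_topology S) {x \<in> topspace (cantor_topology S). shift x \<in> U}"
    by (auto simp: openin_cantor_topology Metric_space.topspace_mtopology[OF Metric_space_cantor_dist])
qed

definition switch_cylinder :: "nat \<Rightarrow> (nat \<Rightarrow> bool) set" where
  "switch_cylinder n = {y \<in> sparse_seqs. switch y n}"

lemma opene_switch_cylinder: "opene sparse_seqs cantor_dist (switch_cylinder n)"
  unfolding opene_def switch_cylinder_def
proof
  show "openin (cantor_topology sparse_seqs) {y \<in> sparse_seqs. switch y n}"
    by (rule openin_cantor_topology_prefix[OF depends_on_prefix_switch[of n "\<lambda>b. b"]])
  show "{y \<in> sparse_seqs. switch y n} \<noteq> {}"
    using step_in_sparse_seqs[of n] switch_step_iff[of n n] by blast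
qed

lemma closedin_switch_cylinder: "closedin (cantor_topology sparse_seqs) (switch_cylinder n)"
  unfolding switch_cylinder_def
  by (rule closedin_cantor_topology_prefix[OF depends_on_prefix_switch[of n "\<lambda>b. b"]])

lemma hitting_times_switch_cylinder:
  assumes "n \<in> hitting_times shift (switch_cylinder i) (switch_cylinder j)"
  shows "even (i + j + n)"
proof -
  obtain y where "y \<in> switch_cylinder i" "(shift ^^ n) y \<in> switch_cylinder j"
    using assms unfolding hitting_times_def by blast
  then have "y \<in> sparse_seqs" "switch y i" "switch y (j + n)"
    by (auto simp: switch_cylinder_def switch_funpow_shift)
  then have "even (i + (j + n))" by (rule sparse_seqs_switch_parity)
  then show ?thesis by (simp add: add.assoc)
qed

lemma hitting_times_funpow: "n \<in> hitting_times (T ^^ k) U V \<longleftrightarrow> k * n \<in> hitting_times T U V"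
  by (simp add: hitting_times_def funpow_mult mult.commute)

lemma funpow_shift_const [simp]: "(shift ^^ n) (\<lambda>_. c) = (\<lambda>_. c)"
  by (simp add: funpow_shift)

text \<open>An isolated point would return to itself at two times differing by 2, so it would be
  2-periodic and hence, by the parity condition, constant; but it must also reach
  \<open>switch_cylinder 0\<close>.\<close>
lemma shift_no_isolated_points:
  assumes x: "x \<in> sparse_seqs"
  shows "\<not> openin (cantor_topology sparse_seqs) {x}"
proof
  assume "openin (cantor_topology sparse_seqs) {x}"
  then have x_opene: "opene sparse_seqs cantor_dist {x}" by (simp add: opene_def)
  obtain M r where Mr: "\<And>n. M \<le> n \<Longrightarrow> even (n + r) \<Longrightarrow> n \<in> hitting_times shift {x} {x}"
    using hitting_times_shift_parity[OF x_opene x_opene] by blast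
  define n where "n = M + (if even (M + r) then 0 else 1)"
  have "n \<in> hitting_times shift {x} {x}" "n + 2 \<in> hitting_times shift {x} {x}"
    using Mr unfolding n_def by auto
  then have "(shift ^^ n) x = x" "(shift ^^ (n + 2)) x = x" by (auto simp: hitting_times_def)
  then have period_2: "x (k + 2) = x k" for k
    by (metis (no_types, lifting) add.commute add.left_commute funpow_shift)
  have "x 1 = x 0"
  proof (rule ccontr)
    assume "x 1 \<noteq> x 0"
    then have "switch x 0" "switch x 1" using period_2[of 0] by (auto simp: switch_def)
    then show False using sparse_seqs_switch_parity[OF x] by fastforce
  qed
  then have "x k = x 0 \<and> x (Suc k) = x 0" for k
    using period_2 by (induction k) (simp_all add: numeral_2_eq_2)
  then have x_const: "x = (\<lambda>_. x 0)" by auto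
  obtain M' r' where "\<And>n. M' \<le> n \<Longrightarrow> even (n + r') \<Longrightarrow> n \<in> hitting_times shift {x} (switch_cylinder 0)"
    using hitting_times_shift_parity[OF x_opene opene_switch_cylinder] by blast
  then have "M' + (if even (M' + r') then 0 else 1) \<in> hitting_times shift {x} (switch_cylinder 0)"
    by auto
  then obtain k where "switch ((shift ^^ k) x) 0"
    by (auto simp: hitting_times_def switch_cylinder_def)
  then show False by (subst (asm) x_const) (simp add: switch_def)
qed

lemma dyn_sys_shift: "dyn_sys sparse_seqs cantor_dist shift"
  unfolding dyn_sys_def
proof (intro conjI)
  show "Metric_space sparse_seqs cantor_dist" by (rule Metric_space_cantor_dist)
  show "compact_space (cantor_topology sparse_seqs)" by (rule compact_space_sparse_seqs)
  show "\<exists>x\<in>sparse_seqs. \<exists>y\<in>sparse_seqs. x \<noteq> y"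
    using const_in_sparse_seqs[of True] const_in_sparse_seqs[of False] by (metis (full_types))
  show "\<forall>x\<in>sparse_seqs. \<not> openin (cantor_topology sparse_seqs) {x}"
    using shift_no_isolated_points by blast
  show "continuous_map (cantor_topology sparse_seqs) (cantor_topology sparse_seqs) shift"
    by (rule continuous_map_shift) (simp add: shift_image_sparse_seqs)
  show "shift ` sparse_seqs = sparse_seqs" by (rule shift_image_sparse_seqs)
qed

lemma not_proximal_shift: "\<not> proximal sparse_seqs cantor_dist shift"
proof
  assume "proximal sparse_seqs cantor_dist shift"
  then have "liminf (\<lambda>n. ereal (cantor_dist ((shift ^^ n) (\<lambda>_. False)) ((shift ^^ n) (\<lambda>_. True)))) = 0"
    using const_in_sparse_seqs unfolding proximal_def by blast
  moreover have "cantor_dist (\<lambda>_::nat. False) (\<lambda>_. True) = 1"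
    by (simp add: cantor_dist_def) (metis (full_types))
  ultimately show False by (simp add: Liminf_const)
qed

lemma not_totally_transitive_shift: "\<not> totally_transitive sparse_seqs cantor_dist shift"
proof
  assume "totally_transitive sparse_seqs cantor_dist shift"
  then have "hitting_times (shift ^^ 2) (switch_cylinder 0) (switch_cylinder 1) \<noteq> {}"
    using opene_switch_cylinder unfolding totally_transitive_def transitive_sys_def by auto
  then obtain n where "2 * n \<in> hitting_times shift (switch_cylinder 0) (switch_cylinder 1)"
    by (auto simp: hitting_times_funpow)
  then show False using hitting_times_switch_cylinder by fastforce
qed

definition has_long_runs :: "(nat \<Rightarrow> 'a) \<Rightarrow> 'a \<Rightarrow> bool" where
  "has_long_runs x c \<longleftrightarrow> (\<forall>L M. \<exists>i\<ge>M. \<forall>j\<le>L. x (i + j) = c)"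

text \<open>Every set in the family contains a hitting time set \<open>N(U, V)\<close>, hence all large times of one
  parity; among them are times at which the orbit of \<open>x\<close> sits in the middle of a long \<open>c\<close>-run.\<close>
lemma const_in_omega_NT_shift:
  assumes x: "x \<in> sparse_seqs" and runs: "has_long_runs x c"
  shows "(\<lambda>_. c) \<in> omega_NT sparse_seqs cantor_dist shift x"
  unfolding omega_NT_def
proof (intro IntI InterI)
  show "(\<lambda>_. c) \<in> sparse_seqs" by (rule const_in_sparse_seqs)
  fix Z assume "Z \<in> (\<lambda>F. cantor_topology sparse_seqs closure_of ((\<lambda>i. (shift ^^ i) x) ` F))
      ` hitting_family sparse_seqs cantor_dist shift"
  then obtain U V F where UV: "opene sparse_seqs cantor_dist U" "opene sparse_seqs cantor_dist V"
    and F: "hitting_times shift U V \<subseteq> F"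
    and Z: "Z = cantor_topology sparse_seqs closure_of ((\<lambda>i. (shift ^^ i) x) ` F)"
    unfolding hitting_family_def by blast
  obtain M r where Mr: "\<And>n. M \<le> n \<Longrightarrow> even (n + r) \<Longrightarrow> n \<in> hitting_times shift U V"
    using hitting_times_shift_parity[OF UV] by blast
  have "\<exists>y\<in>(\<lambda>i. (shift ^^ i) x) ` F \<inter> sparse_seqs. agree_upto (\<lambda>_. c) y L" for L
  proof -
    obtain i where i: "M \<le> i" "\<forall>j\<le>Suc L. x (i + j) = c"
      using runs unfolding has_long_runs_def by blast
    define n where "n = (if even (i + r) then i else Suc i)"
    have "M \<le> n" "even (n + r)" unfolding n_def using i(1) by auto
    then have "n \<in> F" using Mr F by blast
    moreover have "agree_upto (\<lambda>_. c) ((shift ^^ n) x) L"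
    proof -
      have "x (k + n) = c" if "k < L" for k
        using i(2) that spec[OF i(2), of "k + n - i"] unfolding n_def by (auto simp: add.commute)
      then show ?thesis by (simp add: agree_upto_def funpow_shift)
    qed
    ultimately show ?thesis using funpow_shift_in_sparse_seqs[OF x] by blast
  qed
  then show "(\<lambda>_. c) \<in> Z"
    unfolding Z by (intro in_closure_of_cantor_topology const_in_sparse_seqs)
qed

lemma constant_if_no_switch:
  assumes "\<forall>m. i \<le> m \<longrightarrow> m < i + L \<longrightarrow> \<not> switch x m" and "j \<le> L"
  shows "x (i + j) = x i"
  using assms(2)
proof (induction j)
  case (Suc j)
  then have "\<not> switch x (i + j)" using assms(1) by simp
  with Suc show ?case by (simp add: switch_def)
qed simp

lemma card_switches_ge_if_dense:
  assumes "\<forall>i\<ge>M. \<exists>n. i \<le> n \<and> n < i + L \<and> switch x n"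
  shows "m \<le> card ({n. switch x n} \<inter> {M..<M + m*L})"
proof (induction m)
  case (Suc m)
  define a where "a = M + m*L"
  have "M \<le> a" by (simp add: a_def)
  then obtain n where "a \<le> n" "n < a + L" "switch x n" using assms by blast
  then have "card {n} \<le> card ({n. switch x n} \<inter> {a..<a + L})"
    by (intro card_mono) auto
  moreover have "{M..<a + L} = {M..<a} \<union> {a..<a + L}" using \<open>M \<le> a\<close> by auto
  then have "card ({n. switch x n} \<inter> {M..<a + L})
      = card ({n. switch x n} \<inter> {M..<a}) + card ({n. switch x n} \<inter> {a..<a + L})"
    by (simp add: Int_Un_distrib card_Un_disjoint ivl_disj_int_two(3) disjoint_iff)
  ultimately show ?case using Suc.IH by (simp add: a_def algebra_simps)
qed simp

text \<open>If both symbols kept recurring within bounded gaps, every window of length \<open>L\<close> would contain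
  a switch, and the window of length \<open>(L + 1)\<^sup>2\<close> would contain \<open>L + 2\<close> switches.\<close>
lemma sparse_seq_has_long_runs:
  assumes x: "x \<in> sparse_seqs"
  shows "\<exists>c. has_long_runs x c"
proof (rule ccontr)
  assume "\<nexists>c. has_long_runs x c"
  then have "\<exists>L M. \<forall>i\<ge>M. \<exists>j\<le>L. x (i + j) \<noteq> c" for c
    unfolding has_long_runs_def by (meson not_le)
  then obtain L0 M0 L1 M1 where
    L0: "\<forall>i\<ge>M0. \<exists>j\<le>L0. x (i + j) \<noteq> False" and L1: "\<forall>i\<ge>M1. \<exists>j\<le>L1. x (i + j) \<noteq> True"
    by metis
  define L where "L = max L0 L1"
  define M where "M = max M0 M1"
  have "\<exists>n. i \<le> n \<and> n < i + L \<and> switch x n" if "M \<le> i" for i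
  proof (rule ccontr)
    assume "\<nexists>n. i \<le> n \<and> n < i + L \<and> switch x n"
    then have const: "x (i + j) = x i" if "j \<le> L" for j
      using constant_if_no_switch[of i L x j] that by blast
    have "M0 \<le> i" "M1 \<le> i" using \<open>M \<le> i\<close> by (simp_all add: M_def)
    then obtain j0 j1 where "j0 \<le> L0" "x (i + j0)" "j1 \<le> L1" "\<not> x (i + j1)"
      using L0 L1 by blast
    moreover have "L0 \<le> L" "L1 \<le> L" by (simp_all add: L_def)
    ultimately show False using const[of j0] const[of j1] by simp
  qed
  then have "L + 2 \<le> card ({n. switch x n} \<inter> {M..<M + (L + 2)*L})"
    by (intro card_switches_ge_if_dense) blast
  also have "\<dots> \<le> card ({n. switch x n} \<inter> {M..<M + (L + 1)*(L + 1)})"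
    by (intro card_mono) (auto simp: algebra_simps)
  also have "\<dots> \<le> L + 1"
    using sparse_seqs_sparse[OF x] unfolding sparse_def by blast
  finally show False by linarith
qed

lemma transitive_compact_shift: "transitive_compact sparse_seqs cantor_dist shift"
  unfolding transitive_compact_def
proof
  fix x assume x: "x \<in> sparse_seqs"
  obtain c where "has_long_runs x c" using sparse_seq_has_long_runs[OF x] by blast
  then show "omega_NT sparse_seqs cantor_dist shift x \<noteq> {}"
    using const_in_omega_NT_shift[OF x] by blast
qed

section \<open>The point switching at the times \<open>2j\<^sup>2\<close>\<close>

definition square_switch_seq :: "nat \<Rightarrow> bool" where
  "square_switch_seq k = odd (card {j. 2*j*j < k})"

lemma strict_mono_double_square: "strict_mono (\<lambda>j::nat. 2*j*j)"
  by (rule strict_monoI_Suc) simp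

lemma double_square_less_iff: "2*i*i < 2*j*j \<longleftrightarrow> i < (j::nat)"
  using strict_mono_less[OF strict_mono_double_square] by simp

lemma double_square_le_iff: "2*i*i \<le> 2*j*j \<longleftrightarrow> i \<le> (j::nat)"
  using strict_mono_less_eq[OF strict_mono_double_square] by simp

lemma double_square_ge: "(j::nat) \<le> 2*j*j"
  using le_square[of j] by (simp add: mult.assoc)

lemma finite_double_square_less: "finite {j::nat. 2*j*j < k}"
  by (rule finite_subset[of _ "{..<k}"]) (auto intro: le_less_trans[OF double_square_ge])

lemma switch_square_switch_seq_iff: "switch square_switch_seq m \<longleftrightarrow> (\<exists>j. 2*j*j = m)"
proof (cases "\<exists>j. 2*j*j = m")
  case True
  then obtain j0 where j0: "2*j0*j0 = m" by blast
  have "2*j*j = m \<longleftrightarrow> j = j0" for j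
    using j0 double_square_le_iff[of j j0] double_square_le_iff[of j0 j] by auto
  then have "{j. 2*j*j < Suc m} = insert j0 {j. 2*j*j < m}"
    by (auto simp: less_Suc_eq)
  then have "card {j. 2*j*j < Suc m} = Suc (card {j. 2*j*j < m})"
    using j0 finite_double_square_less by simp
  then show ?thesis using True by (simp add: switch_def square_switch_seq_def)
next
  case False
  then have "{j. 2*j*j < Suc m} = {j. 2*j*j < m}" by (auto simp: less_Suc_eq)
  then show ?thesis using False by (simp add: switch_def square_switch_seq_def)
qed

lemma square_switch_seq_switches_have_parity: "switches_have_parity square_switch_seq 0"
  by (auto simp: switches_have_parity_def switch_square_switch_seq_iff)

lemma sparse_double_squares: "sparse {m. \<exists>j::nat. 2*j*j = m}"
  unfolding sparse_def
proof (intro allI)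
  fix i k :: nat
  define J where "J = {j. 2*j*j \<in> {i..<i + k*k}}"
  have "finite J" unfolding J_def by (rule finite_subset[OF _ finite_double_square_less]) auto
  have "card J \<le> k"
  proof (cases "J = {}")
    case False
    define j0 where "j0 = Min J"
    have "j0 \<in> J" unfolding j0_def using \<open>finite J\<close> False by (rule Min_in)
    have "J \<subseteq> {j0..<j0 + k}"
    proof
      fix j assume "j \<in> J"
      have "j0 \<le> j" unfolding j0_def using \<open>finite J\<close> \<open>j \<in> J\<close> by (rule Min_le)
      moreover have "2*(j0 + k)*(j0 + k) \<ge> 2*j0*j0 + k*k" by (simp add: algebra_simps)
      then have "2*j*j < 2*(j0 + k)*(j0 + k)" using \<open>j \<in> J\<close> \<open>j0 \<in> J\<close> unfolding J_def by auto
      then have "j < j0 + k" by (simp only: double_square_less_iff)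
      ultimately show "j \<in> {j0..<j0 + k}" by simp
    qed
    then have "card J \<le> card {j0..<j0 + k}" by (rule card_mono[rotated]) simp
    then show ?thesis by simp
  qed simp
  moreover have "{m. \<exists>j. 2*j*j = m} \<inter> {i..<i + k*k} = (\<lambda>j. 2*j*j) ` J" unfolding J_def by auto
  ultimately show "card ({m. \<exists>j. 2*j*j = m} \<inter> {i..<i + k*k}) \<le> k"
    using card_image_le[OF \<open>finite J\<close>, of "\<lambda>j. 2*j*j"] by simp
qed

lemma square_switch_seq_in_sparse_seqs: "square_switch_seq \<in> sparse_seqs"
proof (rule sparse_seqsI)
  show "even (i + j)" if "switch square_switch_seq i" "switch square_switch_seq j" for i j
    using that by (auto simp: switch_square_switch_seq_iff)
  show "sparse {n. switch square_switch_seq n}"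
    using sparse_double_squares by (simp add: switch_square_switch_seq_iff)
qed

text \<open>Between the switches at \<open>2j\<^sup>2\<close> and \<open>2(j + 1)\<^sup>2\<close> the sequence is constant, equal to
  the parity of \<open>j + 1\<close>, on a run of length \<open>4j + 2\<close>.\<close>
lemma square_switch_seq_has_long_runs: "has_long_runs square_switch_seq c"
  unfolding has_long_runs_def
proof (intro allI)
  fix L M :: nat
  define j where "j = M + L + (if odd (Suc (M + L)) = c then 0 else 1)"
  have "odd (Suc j) = c" "L \<le> j" "M \<le> j" unfolding j_def by auto
  have "{i. 2*i*i < k} = {..j}" if "2*j*j < k" "k \<le> 2*(Suc j)*(Suc j)" for k
  proof (intro set_eqI iffI)
    fix i assume "i \<in> {i. 2*i*i < k}"
    then have "2*i*i < 2*(Suc j)*(Suc j)" using that by simp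
    then show "i \<in> {..j}" using double_square_less_iff[of i "Suc j"] by simp
  next
    fix i assume "i \<in> {..j}"
    then have "2*i*i \<le> 2*j*j" using double_square_le_iff[of i j] by simp
    then show "i \<in> {i. 2*i*i < k}" using that by simp
  qed
  then have "square_switch_seq (Suc (2*j*j) + t) = c" if "t \<le> L" for t
    using that \<open>L \<le> j\<close> \<open>odd (Suc j) = c\<close> by (simp add: square_switch_seq_def algebra_simps)
  moreover have "M \<le> Suc (2*j*j)" using \<open>M \<le> j\<close> double_square_ge[of j] by linarith
  ultimately show "\<exists>i\<ge>M. \<forall>t\<le>L. square_switch_seq (i + t) = c" by blast
qed

definition parity_class :: "nat \<Rightarrow> (nat \<Rightarrow> bool) set" where
  "parity_class p = {y \<in> sparse_seqs. switches_have_parity y p}"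

lemma closedin_parity_class: "closedin (cantor_topology sparse_seqs) (parity_class p)"
proof -
  have "parity_class p = (\<Inter>m. {y \<in> sparse_seqs. switch y m \<longrightarrow> even (m + p)})"
    by (auto simp: parity_class_def switches_have_parity_def)
  moreover have "closedin (cantor_topology sparse_seqs) {y \<in> sparse_seqs. switch y m \<longrightarrow> even (m + p)}"
    for m
    by (rule closedin_cantor_topology_prefix[OF depends_on_prefix_switch[of m "\<lambda>b. b \<longrightarrow> even (m + p)"]])
  ultimately show ?thesis by (simp add: closedin_INT)
qed

lemma parity_class_Int_subset_constants: "parity_class 0 \<inter> parity_class 1 \<subseteq> {(\<lambda>_. False), (\<lambda>_. True)}"
proof
  fix y assume "y \<in> parity_class 0 \<inter> parity_class 1"
  then have "\<not> switch y m" for m by (auto simp: parity_class_def switches_have_parity_def)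
  then have "y k = y 0" for k by (induction k) (auto simp: switch_def)
  then show "y \<in> {(\<lambda>_. False), (\<lambda>_. True)}" by (cases "y 0") auto
qed

lemma funpow_shift_switches_have_parity:
  assumes "switches_have_parity x p" "even (n + r)"
  shows "switches_have_parity ((shift ^^ n) x) (p + r)"
  unfolding switches_have_parity_def
proof (intro allI impI)
  fix m assume "switch ((shift ^^ n) x) m"
  then have "switch x (m + n)" by (simp add: switch_funpow_shift)
  then have "even (m + n + p)" using assms(1) unfolding switches_have_parity_def by blast
  then show "even (m + (p + r))" using assms(2) by presburger
qed

text \<open>The hitting times from \<open>switch_cylinder 0\<close> to \<open>switch_cylinder j\<close> all have the parity
  of \<open>j\<close>, and along them the orbit of \<open>x\<close> stays in a single parity class.\<close>
lemma omega_NT_shift_subset_constants: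
  assumes x: "x \<in> sparse_seqs" and p: "switches_have_parity x p"
  shows "omega_NT sparse_seqs cantor_dist shift x \<subseteq> {(\<lambda>_. False), (\<lambda>_. True)}"
proof -
  let ?closure = "\<lambda>F. cantor_topology sparse_seqs closure_of ((\<lambda>i. (shift ^^ i) x) ` F)"
  have closure_in_class: "?closure (hitting_times shift (switch_cylinder 0) (switch_cylinder j))
      \<subseteq> parity_class (p + j)" for j
  proof (rule closure_of_minimal[OF image_subsetI closedin_parity_class])
    fix n assume "n \<in> hitting_times shift (switch_cylinder 0) (switch_cylinder j)"
    then have "even (n + j)" using hitting_times_switch_cylinder by fastforce
    then have "switches_have_parity ((shift ^^ n) x) (p + j)"
      by (rule funpow_shift_switches_have_parity[OF p])
    then show "(shift ^^ n) x \<in> parity_class (p + j)"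
      using funpow_shift_in_sparse_seqs[OF x] by (simp add: parity_class_def)
  qed
  have "hitting_times shift (switch_cylinder 0) (switch_cylinder j) \<in> hitting_family sparse_seqs cantor_dist shift"
    for j unfolding hitting_family_def using opene_switch_cylinder by blast
  then have "omega_NT sparse_seqs cantor_dist shift x \<subseteq> parity_class p \<inter> parity_class (p + 1)"
    unfolding omega_NT_def using closure_in_class[of 0] closure_in_class[of 1] by fastforce
  moreover have "parity_class p \<inter> parity_class (p + 1) = parity_class 0 \<inter> parity_class 1"
    by (cases "even p") (auto simp: parity_class_def switches_have_parity_def)
  ultimately show ?thesis using parity_class_Int_subset_constants by blast
qed

lemma omega_NT_square_switch_seq:
  "omega_NT sparse_seqs cantor_dist shift square_switch_seq = {(\<lambda>_. False), (\<lambda>_. True)}"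
  using omega_NT_shift_subset_constants[OF square_switch_seq_in_sparse_seqs
      square_switch_seq_switches_have_parity]
    const_in_omega_NT_shift[OF square_switch_seq_in_sparse_seqs square_switch_seq_has_long_runs]
  by blast

lemma omega_T_shift_eventually_constant:
  assumes b: "b \<in> sparse_seqs" and no_switch: "\<forall>m\<ge>M. \<not> switch b m"
  shows "omega_T sparse_seqs cantor_dist shift b \<subseteq> {y. y 0 = b M}"
proof -
  have run: "b (M + d) = b M" for d
  proof (induction d)
    case (Suc d)
    have "\<not> switch b (M + d)" using no_switch by simp
    with Suc show ?case by (simp add: switch_def)
  qed simp
  have "(shift ^^ k) b \<in> {y \<in> sparse_seqs. y 0 = b M}" if "Suc M \<le> k" for k
  proof -
    have "(shift ^^ k) b 0 = b (M + (k - M))" using that by (simp add: funpow_shift)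
    then show ?thesis using run funpow_shift_in_sparse_seqs[OF b] by simp
  qed
  then have "(\<lambda>k. (shift ^^ k) b) ` {Suc M..} \<subseteq> {y \<in> sparse_seqs. y 0 = b M}" by auto
  then have "cantor_topology sparse_seqs closure_of ((\<lambda>k. (shift ^^ k) b) ` {Suc M..})
      \<subseteq> {y \<in> sparse_seqs. y 0 = b M}"
    by (rule closure_of_minimal[OF _ closedin_cantor_topology_prefix[of 1]])
      (simp add: depends_on_prefix_def agree_upto_def)
  then show ?thesis unfolding omega_T_def by fastforce
qed

text \<open>By compactness the nested nonempty closed sets
  \<open>closure {shift\<^sup>k b : k > n} \<inter> switch_cylinder 0\<close> have a common point.\<close>
lemma omega_T_shift_meets_switch_cylinder:
  assumes b: "b \<in> sparse_seqs" and switches: "\<forall>M. \<exists>m\<ge>M. switch b m"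
  shows "omega_T sparse_seqs cantor_dist shift b \<inter> switch_cylinder 0 \<noteq> {}"
proof -
  define C where
    "C n = cantor_topology sparse_seqs closure_of ((\<lambda>k. (shift ^^ k) b) ` {Suc n..}) \<inter> switch_cylinder 0"
    for n
  have "closedin (cantor_topology sparse_seqs) (C n)" for n
    unfolding C_def by (rule closedin_Int[OF closedin_closure_of closedin_switch_cylinder])
  moreover have "C n \<noteq> {}" for n
  proof -
    obtain m where m: "Suc n \<le> m" "switch b m" using switches by blast
    have "(shift ^^ m) b \<in> (\<lambda>k. (shift ^^ k) b) ` {Suc n..}" using m(1) by simp
    moreover have "(shift ^^ m) b \<in> switch_cylinder 0"
      using funpow_shift_in_sparse_seqs[OF b] m(2) by (simp add: switch_cylinder_def switch_funpow_shift)
    ultimately show ?thesis unfolding C_def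
      using closure_of_subset[of "(\<lambda>k. (shift ^^ k) b) ` {Suc n..}" "cantor_topology sparse_seqs"]
        funpow_shift_in_sparse_seqs[OF b]
      by (auto simp: Metric_space.topspace_mtopology[OF Metric_space_cantor_dist])
  qed
  moreover have "decseq C"
    unfolding C_def by (intro decseq_SucI Int_mono closure_of_mono image_mono) auto
  ultimately have "\<Inter> (range C) \<noteq> {}"
    using compact_space_sparse_seqs
    unfolding Metric_space.compact_space_nest[OF Metric_space_cantor_dist] by blast
  moreover have "\<Inter> (range C) \<subseteq> omega_T sparse_seqs cantor_dist shift b \<inter> switch_cylinder 0"
  proof
    fix z assume z: "z \<in> \<Inter> (range C)"
    have "z \<in> cantor_topology sparse_seqs closure_of ((\<lambda>k. (shift ^^ k) b) ` {n..})" if "1 \<le> n" for n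
    proof -
      have "z \<in> C (n - 1)" using z by blast
      moreover have "Suc (n - 1) = n" using that by simp
      ultimately show ?thesis unfolding C_def by simp
    qed
    moreover have "z \<in> switch_cylinder 0" using z unfolding C_def by blast
    ultimately show "z \<in> omega_T sparse_seqs cantor_dist shift b \<inter> switch_cylinder 0"
      unfolding omega_T_def by (auto simp: switch_cylinder_def)
  qed
  ultimately show ?thesis by blast
qed

lemma omega_T_shift_not_constants:
  assumes b: "b \<in> sparse_seqs"
  shows "omega_T sparse_seqs cantor_dist shift b \<noteq> {(\<lambda>_. False), (\<lambda>_. True)}"
proof
  assume eq: "omega_T sparse_seqs cantor_dist shift b = {(\<lambda>_. False), (\<lambda>_. True)}"
  show False
  proof (cases "\<exists>M. \<forall>m\<ge>M. \<not> switch b m")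
    case True
    then obtain M where "\<forall>m\<ge>M. \<not> switch b m" by blast
    then show False using omega_T_shift_eventually_constant[OF b] eq by blast
  next
    case False
    then have "omega_T sparse_seqs cantor_dist shift b \<inter> switch_cylinder 0 \<noteq> {}"
      using omega_T_shift_meets_switch_cylinder[OF b] by blast
    then show False using eq by (auto simp: switch_cylinder_def switch_def)
  qed
qed

lemma omega_NT_square_switch_seq_ne_omega_T:
  "\<forall>b\<in>sparse_seqs. omega_NT sparse_seqs cantor_dist shift square_switch_seq
     \<noteq> omega_T sparse_seqs cantor_dist shift b"
  using omega_NT_square_switch_seq omega_T_shift_not_constants by metis

section \<open>Relabelling a system\<close>

locale relabelling =
  fixes e :: "'a \<Rightarrow> 'b" and g :: "'b \<Rightarrow> 'a"
  assumes g_e [simp]: "g (e a) = a" and e_g [simp]: "e (g r) = r"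
begin

definition rdist :: "('a \<Rightarrow> 'a \<Rightarrow> real) \<Rightarrow> 'b \<Rightarrow> 'b \<Rightarrow> real" where
  "rdist D r s = D (g r) (g s)"

definition rmap :: "('a \<Rightarrow> 'a) \<Rightarrow> 'b \<Rightarrow> 'b" where
  "rmap f r = e (f (g r))"

lemma funpow_rmap: "(rmap f ^^ n) r = e ((f ^^ n) (g r))"
  by (induction n) (simp_all add: rmap_def)

lemma rmap_funpow: "rmap f ^^ n = rmap (f ^^ n)"
  by (simp add: fun_eq_iff funpow_rmap rmap_def)

lemma e_in_image_iff [simp]: "e x \<in> e ` V \<longleftrightarrow> x \<in> V"
  by (metis g_e image_iff)

lemma hitting_times_rmap: "hitting_times (rmap f) (e ` U) (e ` V) = hitting_times f U V"
  by (auto simp: hitting_times_def funpow_rmap)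

lemma bij_e: "bij e"
  by (metis bijI' e_g g_e)

context
  fixes S :: "'a set" and D :: "'a \<Rightarrow> 'a \<Rightarrow> real"
  assumes metric: "Metric_space S D"
begin

interpretation S: Metric_space S D
  by (rule metric)

lemma Metric_space_rdist: "Metric_space (e ` S) (rdist D)"
  by unfold_locales (auto simp: rdist_def S.commute intro: S.triangle)

interpretation X: Metric_space "e ` S" "rdist D"
  by (rule Metric_space_rdist)

lemma homeomorphic_map_e: "homeomorphic_map S.mtopology X.mtopology e"
proof -
  interpret Metric_space12 S D "e ` S" "rdist D" by unfold_locales
  show ?thesis by (rule isometry_imp_homeomorphic_map) (auto simp: rdist_def)
qed

lemma homeomorphic_map_g: "homeomorphic_map X.mtopology S.mtopology g"
proof -
  interpret Metric_space12 "e ` S" "rdist D" S D by unfold_locales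
  show ?thesis by (rule isometry_imp_homeomorphic_map) (auto simp: rdist_def image_image)
qed

lemma opene_image_iff: "U \<subseteq> S \<Longrightarrow> opene (e ` S) (rdist D) (e ` U) \<longleftrightarrow> opene S D U"
  unfolding opene_def using homeomorphic_map_openness[OF homeomorphic_map_e] by auto

lemma opene_rdist_iff: "opene (e ` S) (rdist D) W \<longleftrightarrow> (\<exists>U. W = e ` U \<and> opene S D U)"
proof
  assume W: "opene (e ` S) (rdist D) W"
  then have "W \<subseteq> e ` S"
    unfolding opene_def using openin_subset X.topspace_mtopology by metis
  then have "g ` W \<subseteq> S" by auto
  moreover have W_eq: "e ` (g ` W) = W" by (simp add: image_image)
  ultimately have "opene S D (g ` W)" using opene_image_iff[of "g ` W"] W by simp
  then show "\<exists>U. W = e ` U \<and> opene S D U" using W_eq by blast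
next
  assume "\<exists>U. W = e ` U \<and> opene S D U"
  then obtain U where U: "W = e ` U" "opene S D U" by blast
  then have "U \<subseteq> S"
    unfolding opene_def using openin_subset S.topspace_mtopology by metis
  then show "opene (e ` S) (rdist D) W" using opene_image_iff U by blast
qed

lemma hitting_family_rmap: "hitting_family (e ` S) (rdist D) (rmap f) = hitting_family S D f"
proof (intro set_eqI iffI)
  fix F assume "F \<in> hitting_family (e ` S) (rdist D) (rmap f)"
  then obtain U V where "opene S D U" "opene S D V" "hitting_times (rmap f) (e ` U) (e ` V) \<subseteq> F"
    unfolding hitting_family_def opene_rdist_iff by blast
  then show "F \<in> hitting_family S D f" unfolding hitting_family_def hitting_times_rmap by blast
next
  fix F assume "F \<in> hitting_family S D f"
  then obtain U V where "opene S D U" "opene S D V" "hitting_times f U V \<subseteq> F"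
    unfolding hitting_family_def by blast
  then show "F \<in> hitting_family (e ` S) (rdist D) (rmap f)"
    unfolding hitting_family_def opene_rdist_iff using hitting_times_rmap[of f U V] by blast
qed

lemma transitive_sys_rmap_iff: "transitive_sys (e ` S) (rdist D) (rmap f) \<longleftrightarrow> transitive_sys S D f"
proof -
  have "(\<forall>U V. opene S D U \<and> opene S D V \<longrightarrow> hitting_times (rmap f) (e ` U) (e ` V) \<noteq> {})
      \<longleftrightarrow> transitive_sys S D f"
    by (simp add: transitive_sys_def hitting_times_rmap)
  then show ?thesis unfolding transitive_sys_def opene_rdist_iff by blast
qed

lemma totally_transitive_rmap_iff:
  "totally_transitive (e ` S) (rdist D) (rmap f) \<longleftrightarrow> totally_transitive S D f"
  by (simp add: totally_transitive_def rmap_funpow transitive_sys_rmap_iff)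

lemma proximal_rmap_iff: "proximal (e ` S) (rdist D) (rmap f) \<longleftrightarrow> proximal S D f"
  by (simp add: proximal_def rdist_def funpow_rmap)

context
  fixes f :: "'a \<Rightarrow> 'a"
  assumes f: "f ` S \<subseteq> S"
begin

lemma closure_of_orbit_rmap:
  assumes "a \<in> S"
  shows "X.mtopology closure_of ((\<lambda>i. (rmap f ^^ i) (e a)) ` F)
    = e ` (S.mtopology closure_of ((\<lambda>i. (f ^^ i) a) ` F))"
proof -
  have "(f ^^ n) a \<in> S" for n
    using assms f by (induction n) auto
  then show ?thesis
    using homeomorphic_map_closure_of[OF homeomorphic_map_e, of "(\<lambda>i. (f ^^ i) a) ` F"]
    by (auto simp: funpow_rmap image_image)
qed

lemma omega_NT_rmap:
  "a \<in> S \<Longrightarrow> omega_NT (e ` S) (rdist D) (rmap f) (e a) = e ` omega_NT S D f a"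
  unfolding omega_NT_def hitting_family_rmap closure_of_orbit_rmap
  by (simp add: image_Int bij_image_INT bij_e bij_is_inj)

lemma omega_T_rmap:
  "a \<in> S \<Longrightarrow> omega_T (e ` S) (rdist D) (rmap f) (e a) = e ` omega_T S D f a"
  unfolding omega_T_def closure_of_orbit_rmap
  by (simp add: image_Int bij_image_INT bij_e bij_is_inj)

lemma transitive_compact_rmap_iff:
  "transitive_compact (e ` S) (rdist D) (rmap f) \<longleftrightarrow> transitive_compact S D f"
  by (simp add: transitive_compact_def omega_NT_rmap)

lemma omega_NT_ne_omega_T_rmap:
  assumes "a \<in> S" and "\<forall>b\<in>S. omega_NT S D f a \<noteq> omega_T S D f b"
  shows "\<forall>x\<in>e ` S. omega_NT (e ` S) (rdist D) (rmap f) (e a) \<noteq> omega_T (e ` S) (rdist D) (rmap f) x"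
  using assms omega_NT_rmap omega_T_rmap inj_image_eq_iff[OF bij_is_inj[OF bij_e]] by auto

end

lemma dyn_sys_rmap:
  assumes "dyn_sys S D f"
  shows "dyn_sys (e ` S) (rdist D) (rmap f)"
  unfolding dyn_sys_def
proof (intro conjI)
  show "Metric_space (e ` S) (rdist D)" by (rule Metric_space_rdist)
  have e: "continuous_map S.mtopology X.mtopology e"
    using homeomorphic_map_e homeomorphic_imp_continuous_map by blast
  have g: "continuous_map X.mtopology S.mtopology g"
    using homeomorphic_map_g homeomorphic_imp_continuous_map by blast
  have "compactin X.mtopology (e ` S)"
    using assms image_compactin[OF _ e] by (auto simp: dyn_sys_def compact_space_def)
  then show "compact_space X.mtopology" by (simp add: compact_space_def)
  show "\<exists>x\<in>e ` S. \<exists>y\<in>e ` S. x \<noteq> y"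
    using assms unfolding dyn_sys_def by (metis g_e image_eqI)
  show "\<forall>x\<in>e ` S. \<not> openin X.mtopology {x}"
  proof
    fix x assume "x \<in> e ` S"
    then obtain a where "a \<in> S" "x = e a" by blast
    then show "\<not> openin X.mtopology {x}"
      using assms homeomorphic_map_openness[OF homeomorphic_map_e, of "{a}"] by (auto simp: dyn_sys_def)
  qed
  have "rmap f = e \<circ> f \<circ> g" by (simp add: fun_eq_iff rmap_def)
  then show "continuous_map X.mtopology X.mtopology (rmap f)"
    using assms continuous_map_compose[OF g continuous_map_compose[OF _ e]]
    by (simp add: dyn_sys_def)
  show "rmap f ` e ` S = e ` S"
    using assms by (simp add: dyn_sys_def image_image rmap_def flip: image_image[of e f S])
qed

end

end

theorem corollary6p5:
  shows "\<exists>(X :: real set) (d :: real \<Rightarrow> real \<Rightarrow> real) (T :: real \<Rightarrow> real) (x0 :: real).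
           dyn_sys X d T \<and>
           \<not> proximal X d T \<and>
           \<not> totally_transitive X d T \<and>
           transitive_compact X d T \<and>
           x0 \<in> X \<and>
           (\<forall>x\<in>X. omega_NT X d T x0 \<noteq> omega_T X d T x)"
proof -
  obtain \<phi> :: "nat set \<Rightarrow> real" where \<phi>: "bij \<phi>"
    using nat_sets_eqpoll_reals unfolding eqpoll_def by blast
  interpret relabelling "\<lambda>x. \<phi> {n. x n}" "\<lambda>r n. n \<in> inv \<phi> r"
    by unfold_locales (simp_all add: \<phi> bij_is_inj bij_is_surj surj_f_inv_f)
  have metric: "Metric_space sparse_seqs cantor_dist" and invariant: "shift ` sparse_seqs \<subseteq> sparse_seqs"
    by (simp_all add: Metric_space_cantor_dist shift_image_sparse_seqs)
  show ?thesis
    using dyn_sys_rmap[OF metric dyn_sys_shift]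
      not_proximal_shift proximal_rmap_iff[OF metric]
      not_totally_transitive_shift totally_transitive_rmap_iff[OF metric]
      transitive_compact_shift transitive_compact_rmap_iff[OF metric invariant]
      omega_NT_ne_omega_T_rmap[OF metric invariant square_switch_seq_in_sparse_seqs
        omega_NT_square_switch_seq_ne_omega_T]
      square_switch_seq_in_sparse_seqs
    by blast
qed

end
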